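(* Let $G$ be a finite nilpotent group whose order has at least four distinct prime divisors. Then the difference graph $\mathcal{D}(G)$ is not perfect.
   Context: For a finite group $G$ with identity $e$: the intersection power graph $\mathcal{G}_I(G)$ has vertex set $G$, two distinct non-identity vertices $x,y$ being adjacent iff $\langle x\rangle\cap\langle y\rangle\neq\{e\}$, and $e$ being adjacent to every other vertex. The power graph $\mathcal{P}(G)$ has vertex set $G$, two distinct vertices being adjacent iff one is a power of the other. The difference graph $\mathcal{D}(G)$ is the graph on vertex set $G$ with edge set $E(\mathcal{G}_I(G))\setminus E(\mathcal{P}(G))$, with all isolated vertices removed. *)

theory Defs
  imports "HOL-Algebra.Algebra" "HOL-Computational_Algebra.Primes"
begin

primrec lower_central :: "('a, 'b) monoid_scheme \<Rightarrow> nat \<Rightarrow> 'a set" where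
  "lower_central G 0 = carrier G"
| "lower_central G (Suc n) =
     generate G {h \<otimes>\<^bsub>G\<^esub> g \<otimes>\<^bsub>G\<^esub> inv\<^bsub>G\<^esub> h \<otimes>\<^bsub>G\<^esub> inv\<^bsub>G\<^esub> g
                 | h g. h \<in> lower_central G n \<and> g \<in> carrier G}"

definition nilpotent_group :: "('a, 'b) monoid_scheme \<Rightarrow> bool" where
  "nilpotent_group G \<longleftrightarrow> group G \<and> (\<exists>n. lower_central G n = {\<one>\<^bsub>G\<^esub>})"

definition is_clique :: "'v set \<Rightarrow> ('v \<Rightarrow> 'v \<Rightarrow> bool) \<Rightarrow> bool" where
  "is_clique K E \<longleftrightarrow> (\<forall>x\<in>K. \<forall>y\<in>K. x \<noteq> y \<longrightarrow> E x y)"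

definition clique_number :: "'v set \<Rightarrow> ('v \<Rightarrow> 'v \<Rightarrow> bool) \<Rightarrow> nat" where
  "clique_number V E = Max {card K | K. K \<subseteq> V \<and> is_clique K E}"

definition proper_colouring :: "'v set \<Rightarrow> ('v \<Rightarrow> 'v \<Rightarrow> bool) \<Rightarrow> ('v \<Rightarrow> nat) \<Rightarrow> nat \<Rightarrow> bool" where
  "proper_colouring V E c k \<longleftrightarrow>
     (\<forall>x\<in>V. c x < k) \<and> (\<forall>x\<in>V. \<forall>y\<in>V. x \<noteq> y \<longrightarrow> E x y \<longrightarrow> c x \<noteq> c y)"

definition chromatic_number :: "'v set \<Rightarrow> ('v \<Rightarrow> 'v \<Rightarrow> bool) \<Rightarrow> nat" where
  "chromatic_number V E = (LEAST k. \<exists>c. proper_colouring V E c k)"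

definition perfect_graph :: "'v set \<Rightarrow> ('v \<Rightarrow> 'v \<Rightarrow> bool) \<Rightarrow> bool" where
  "perfect_graph V E \<longleftrightarrow> (\<forall>S\<subseteq>V. chromatic_number S E = clique_number S E)"

definition power_graph_edge :: "('a, 'b) monoid_scheme \<Rightarrow> 'a \<Rightarrow> 'a \<Rightarrow> bool" where
  "power_graph_edge G x y \<longleftrightarrow> x \<in> carrier G \<and> y \<in> carrier G \<and> x \<noteq> y \<and>
     ((\<exists>k::int. y = x [^]\<^bsub>G\<^esub> k) \<or> (\<exists>k::int. x = y [^]\<^bsub>G\<^esub> k))"

definition int_power_graph_edge :: "('a, 'b) monoid_scheme \<Rightarrow> 'a \<Rightarrow> 'a \<Rightarrow> bool" where
  "int_power_graph_edge G x y \<longleftrightarrow> x \<in> carrier G \<and> y \<in> carrier G \<and> x \<noteq> y \<and>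
     (x = \<one>\<^bsub>G\<^esub> \<or> y = \<one>\<^bsub>G\<^esub> \<or>
      generate G {x} \<inter> generate G {y} \<noteq> {\<one>\<^bsub>G\<^esub>})"

definition diff_graph_edge :: "('a, 'b) monoid_scheme \<Rightarrow> 'a \<Rightarrow> 'a \<Rightarrow> bool" where
  "diff_graph_edge G x y \<longleftrightarrow> int_power_graph_edge G x y \<and> \<not> power_graph_edge G x y"

definition diff_graph_vertices :: "('a, 'b) monoid_scheme \<Rightarrow> 'a set" where
  "diff_graph_vertices G = {x \<in> carrier G. \<exists>y. diff_graph_edge G x y}"

end

theory Submission
  imports Defs
begin

text \<open>
  In a nilpotent group, elements \<open>x\<close>, \<open>y\<close> of coprime orders commute: their commutator lies in
  every term of the lower central series, because modulo the next term it is central, and a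
  central commutator \<open>c\<close> of elements with \<open>x\<^sup>m = y\<^sup>n = 1\<close>, \<open>gcd m n = 1\<close>, satisfies
  \<open>c\<^sup>m = c\<^sup>n = 1\<close>.

  So, given elements \<open>a, b, c, d\<close> of four distinct prime orders, the products
  \<open>ab, ac, cd, abc, acd\<close> form an induced 5-cycle of the difference graph: consecutive ones
  share the subgroup \<open>\<langle>a\<rangle>\<close> or \<open>\<langle>c\<rangle>\<close> while neither is a power of the other, whereas
  \<open>ab\<close> and \<open>cd\<close> have coprime orders and each other non-consecutive pair has one member in the
  cyclic subgroup generated by the other. An induced 5-cycle has clique number 2 but
  chromatic number 3.
\<close>

lemma (in group) inv_mult_cancel [simp]:
  "x \<in> carrier G \<Longrightarrow> y \<in> carrier G \<Longrightarrow> inv x \<otimes> (x \<otimes> y) = y"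
  by (simp flip: m_assoc)

lemma (in group) mult_inv_cancel [simp]:
  "x \<in> carrier G \<Longrightarrow> y \<in> carrier G \<Longrightarrow> x \<otimes> (inv x \<otimes> y) = y"
  by (simp flip: m_assoc)

lemma (in group) lower_central_normal: "lower_central G k \<lhd> G"
proof (induction k)
  case 0
  show ?case by (simp add: normal_self)
next
  case (Suc k)
  interpret N: normal "lower_central G k" G by (fact Suc)
  show ?case
    unfolding lower_central.simps(2)
  proof (rule normal_generateI)
    show "{h \<otimes> g \<otimes> inv h \<otimes> inv g | h g. h \<in> lower_central G k \<and> g \<in> carrier G} \<subseteq> carrier G"
      using N.subset by blast
  next
    fix z t
    assume "z \<in> {h \<otimes> g \<otimes> inv h \<otimes> inv g | h g. h \<in> lower_central G k \<and> g \<in> carrier G}"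
      and t: "t \<in> carrier G"
    then obtain h g where z: "z = h \<otimes> g \<otimes> inv h \<otimes> inv g"
      and h: "h \<in> lower_central G k" and g: "g \<in> carrier G"
      by blast
    have hc: "h \<in> carrier G" using h N.subset by blast
    have "t \<otimes> z \<otimes> inv t =
        (t \<otimes> h \<otimes> inv t) \<otimes> (t \<otimes> g \<otimes> inv t) \<otimes> inv (t \<otimes> h \<otimes> inv t) \<otimes> inv (t \<otimes> g \<otimes> inv t)"
      by (simp add: z hc g t m_assoc inv_mult_group)
    moreover have "t \<otimes> h \<otimes> inv t \<in> lower_central G k"
      using N.inv_op_closed2 h t by blast
    ultimately show "t \<otimes> z \<otimes> inv t
        \<in> {h \<otimes> g \<otimes> inv h \<otimes> inv g | h g. h \<in> lower_central G k \<and> g \<in> carrier G}"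
      using t g by blast
  qed
qed

lemma (in group) conj_nat_pow:
  assumes "g \<in> carrier G" "x \<in> carrier G"
  shows "(g \<otimes> x \<otimes> inv g) [^] (n::nat) = g \<otimes> x [^] n \<otimes> inv g"
proof (induction n)
  case 0
  show ?case using assms by simp
next
  case (Suc n)
  then show ?case using assms by (simp add: m_assoc)
qed

lemma (in group) commutator_eq_one_iff:
  assumes "x \<in> carrier G" "y \<in> carrier G"
  shows "x \<otimes> y \<otimes> inv x \<otimes> inv y = \<one> \<longleftrightarrow> x \<otimes> y = y \<otimes> x"
proof -
  have "x \<otimes> y \<otimes> inv x \<otimes> inv y = (x \<otimes> y) \<otimes> inv (y \<otimes> x)"
    using assms by (simp add: m_assoc inv_mult_group)
  then show ?thesis
    using assms by (simp add: inv_solve_right')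
qed

lemma (in group) eq_one_if_coprime_pows_eq_one:
  assumes "x \<in> carrier G" "x [^] (m::nat) = \<one>" "x [^] (n::nat) = \<one>" "coprime m n"
  shows "x = \<one>"
proof -
  have "ord x dvd m" "ord x dvd n"
    using assms pow_eq_id by simp_all
  then have "ord x = 1"
    using \<open>coprime m n\<close> coprime_common_divisor_nat by blast
  then show ?thesis
    using assms ord_eq_1 by simp
qed

lemma (in group) central_commutator_eq_one_if_coprime_pows:
  assumes x: "x \<in> carrier G" and y: "y \<in> carrier G"
    and xm: "x [^] (m::nat) = \<one>" and yn: "y [^] (n::nat) = \<one>" and "coprime m n"
    and c: "c = x \<otimes> y \<otimes> inv x \<otimes> inv y"
    and cx: "c \<otimes> x = x \<otimes> c" and cy: "c \<otimes> y = y \<otimes> c"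
  shows "c = \<one>"
proof -
  have cc: "c \<in> carrier G"
    using c x y by simp
  have conj_y: "x \<otimes> y \<otimes> inv x = c \<otimes> y"
    using c x y by (simp add: m_assoc)
  have conj_x: "y \<otimes> x \<otimes> inv y = inv c \<otimes> x"
    using c x y by (simp add: m_assoc inv_mult_group)
  have inv_cx: "inv c \<otimes> x = x \<otimes> inv c"
  proof -
    have "inv c \<otimes> x = inv c \<otimes> (x \<otimes> c) \<otimes> inv c"
      using x cc by (simp add: m_assoc)
    also have "\<dots> = x \<otimes> inv c"
      using x cc by (simp add: m_assoc flip: cx)
    finally show ?thesis .
  qed
  have "\<one> = x \<otimes> y [^] n \<otimes> inv x"
    using x yn by simp
  also have "\<dots> = (c \<otimes> y) [^] n"
    using x y by (simp add: conj_y flip: conj_nat_pow)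
  also have "\<dots> = c [^] n"
    using y cc yn by (simp add: pow_mult_distrib[OF cy])
  finally have cn: "c [^] n = \<one>" ..
  have "\<one> = y \<otimes> x [^] m \<otimes> inv y"
    using y xm by simp
  also have "\<dots> = (inv c \<otimes> x) [^] m"
    using x y by (simp add: conj_x flip: conj_nat_pow)
  also have "\<dots> = inv (c [^] m)"
    using x cc xm by (simp add: pow_mult_distrib[OF inv_cx] nat_pow_inv)
  finally have cm: "c [^] m = \<one>"
    using cc by (metis inv_eq_1_iff nat_pow_closed)
  show ?thesis
    by (rule eq_one_if_coprime_pows_eq_one[OF cc cm cn \<open>coprime m n\<close>])
qed

lemma (in group_hom) hom_commutator:
  assumes "x \<in> carrier G" "y \<in> carrier G"
  shows "h (x \<otimes> y \<otimes> inv x \<otimes> inv y) = h x \<otimes>\<^bsub>H\<^esub> h y \<otimes>\<^bsub>H\<^esub> inv\<^bsub>H\<^esub> h x \<otimes>\<^bsub>H\<^esub> inv\<^bsub>H\<^esub> h y"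
  using assms by simp

lemma (in group) coprime_commutator_in_lower_central:
  assumes x: "x \<in> carrier G" and y: "y \<in> carrier G" and "coprime (ord x) (ord y)"
  shows "x \<otimes> y \<otimes> inv x \<otimes> inv y \<in> lower_central G k"
proof (induction k)
  case 0
  show ?case using x y by simp
next
  case (Suc k)
  define N where "N = lower_central G (Suc k)"
  let ?c = "x \<otimes> y \<otimes> inv x \<otimes> inv y"
  let ?Q = "G Mod N"
  interpret N: normal N G
    unfolding N_def by (rule lower_central_normal)
  interpret Q: group_hom G ?Q "\<lambda>a. N #> a"
    unfolding group_hom_def group_hom_axioms_def
    using N.r_coset_hom_Mod N.factorgroup_is_group is_group by blast
  have c: "?c \<in> carrier G"
    using x y by simp
  have central: "(N #> ?c) \<otimes>\<^bsub>?Q\<^esub> (N #> g) = (N #> g) \<otimes>\<^bsub>?Q\<^esub> (N #> ?c)"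
    if g: "g \<in> carrier G" for g
  proof -
    have "?c \<otimes> g \<otimes> inv ?c \<otimes> inv g \<in> N"
      unfolding N_def using Suc g by (auto intro: generate.incl)
    then have "N #> (?c \<otimes> g \<otimes> inv ?c \<otimes> inv g) = \<one>\<^bsub>?Q\<^esub>"
      using c g by (simp add: coset_join2 N.subgroup_axioms)
    then show ?thesis
      using c g Q.hom_commutator[of ?c g] by (metis Q.H.commutator_eq_one_iff Q.hom_closed)
  qed
  have "N #> ?c = \<one>\<^bsub>?Q\<^esub>"
  proof (rule Q.H.central_commutator_eq_one_if_coprime_pows[of "N #> x" "N #> y" "ord x" "ord y"])
    show "(N #> x) [^]\<^bsub>?Q\<^esub> ord x = \<one>\<^bsub>?Q\<^esub>"
      "(N #> y) [^]\<^bsub>?Q\<^esub> ord y = \<one>\<^bsub>?Q\<^esub>"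
      using x y by (simp_all flip: Q.hom_nat_pow)
    show "N #> ?c = (N #> x) \<otimes>\<^bsub>?Q\<^esub> (N #> y) \<otimes>\<^bsub>?Q\<^esub> inv\<^bsub>?Q\<^esub> (N #> x)
        \<otimes>\<^bsub>?Q\<^esub> inv\<^bsub>?Q\<^esub> (N #> y)"
      using x y by (rule Q.hom_commutator)
    show "(N #> ?c) \<otimes>\<^bsub>?Q\<^esub> (N #> x) = (N #> x) \<otimes>\<^bsub>?Q\<^esub> (N #> ?c)"
      "(N #> ?c) \<otimes>\<^bsub>?Q\<^esub> (N #> y) = (N #> y) \<otimes>\<^bsub>?Q\<^esub> (N #> ?c)"
      using central x y by blast+
  qed (use x y \<open>coprime (ord x) (ord y)\<close> in simp_all)
  then show ?case
    using c coset_join1 N.subgroup_axioms unfolding N_def by simp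
qed

lemma nilpotent_group_coprime_commute:
  assumes "nilpotent_group G" "x \<in> carrier G" "y \<in> carrier G" "coprime (group.ord G x) (group.ord G y)"
  shows "x \<otimes>\<^bsub>G\<^esub> y = y \<otimes>\<^bsub>G\<^esub> x"
proof -
  interpret group G
    using assms(1) unfolding nilpotent_group_def by blast
  obtain k where "lower_central G k = {\<one>\<^bsub>G\<^esub>}"
    using assms(1) unfolding nilpotent_group_def by blast
  then show ?thesis
    using assms coprime_commutator_in_lower_central[of x y k] commutator_eq_one_iff by blast
qed

lemma (in group) exists_ord_eq_prime:
  assumes "finite (carrier G)" "Factorial_Ring.prime p" "p dvd order G"
  obtains a where "a \<in> carrier G" "ord a = p"
proof -
  obtain m where "order G = p ^ 1 * m"
    using assms(3) by auto
  then obtain H where H: "subgroup H G" "card H = p"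
    using sylow_thm[OF assms(2) is_group] assms(1) by fastforce
  then have "H \<noteq> {\<one>}"
    using assms(2) by auto
  then obtain a where a: "a \<in> H" "a \<noteq> \<one>"
    using subgroup.one_closed[OF H(1)] by blast
  have "a [^]\<^bsub>G\<lparr>carrier := H\<rparr>\<^esub> p = \<one>\<^bsub>G\<lparr>carrier := H\<rparr>\<^esub>"
    using group.pow_order_eq_1[OF subgroup_imp_group[OF H(1)]] a(1) H(2) by (simp add: order_def)
  then have "a [^] p = \<one>"
    by (simp flip: nat_pow_consistent)
  moreover have "a \<in> carrier G"
    using H(1) a(1) subgroup.subset by blast
  ultimately have "ord a dvd p" "ord a \<noteq> 1"
    using a(2) pow_eq_id ord_eq_1 by auto
  then have "ord a = p"
    using assms(2) unfolding prime_nat_iff by blast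
  then show ?thesis
    using that \<open>a \<in> carrier G\<close> by blast
qed

lemma (in group) pow_eq_one_if_in_generate:
  assumes x: "x \<in> carrier G" and "y \<in> generate G {x}" and xm: "x [^] (m::nat) = \<one>"
  shows "y [^] m = \<one>"
proof -
  obtain k :: int where y: "y = x [^] k"
    using assms(2) generate_pow[OF x] by blast
  have "y [^] m = (x [^] int m) [^] k"
    using x by (simp add: y int_pow_pow mult.commute flip: int_pow_int)
  then show ?thesis
    using xm by (simp add: int_pow_int)
qed

lemma (in group) in_generate_if_pow_eq:
  assumes x: "x \<in> carrier G" and y: "y \<in> carrier G"
    and yn: "y [^] (n::nat) = \<one>" and "coprime m n" and eq: "y [^] (m::nat) = x [^] m"
  shows "y \<in> generate G {x}"
proof -
  obtain u v :: int where uv: "u * int m + v * int n = 1"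
    using \<open>coprime m n\<close> by (metis bezout_int coprime_iff_gcd_eq_1 coprime_int_iff)
  have "y = y [^] (int m * u + int n * v)"
    using y uv by (simp add: mult.commute)
  also have "\<dots> = (y [^] int m) [^] u \<otimes> (y [^] int n) [^] v"
    using y by (simp add: int_pow_mult int_pow_pow)
  also have "\<dots> = (x [^] int m) [^] u"
    using x y yn eq by (simp add: int_pow_int)
  also have "\<dots> = x [^] (int m * u)"
    using x by (simp add: int_pow_pow)
  finally show ?thesis
    using generate_pow[OF x] by blast
qed

lemma (in group) generate_inter_eq_one_if_coprime_pows:
  assumes x: "x \<in> carrier G" and y: "y \<in> carrier G"
    and "x [^] (m::nat) = \<one>" "y [^] (n::nat) = \<one>" "coprime m n"
  shows "generate G {x} \<inter> generate G {y} = {\<one>}"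
proof -
  have "z = \<one>" if "z \<in> generate G {x}" "z \<in> generate G {y}" for z
  proof (rule eq_one_if_coprime_pows_eq_one)
    show "z \<in> carrier G"
      using that(1) generate_incl[of "{x}"] x by blast
    show "z [^] m = \<one>" "z [^] n = \<one>"
      using that assms pow_eq_one_if_in_generate by blast+
  qed (fact \<open>coprime m n\<close>)
  then show ?thesis
    using generate.one by blast
qed

lemma (in group) power_graph_edge_iff:
  "power_graph_edge G x y \<longleftrightarrow> x \<in> carrier G \<and> y \<in> carrier G \<and> x \<noteq> y \<and>
     (y \<in> generate G {x} \<or> x \<in> generate G {y})"
  unfolding power_graph_edge_def by (auto simp: generate_pow)

lemma (in group) diff_graph_edge_iff:
  "diff_graph_edge G x y \<longleftrightarrow> x \<in> carrier G \<and> y \<in> carrier G \<and>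
     generate G {x} \<inter> generate G {y} \<noteq> {\<one>} \<and> x \<notin> generate G {y} \<and> y \<notin> generate G {x}"
  unfolding diff_graph_edge_def int_power_graph_edge_def power_graph_edge_iff
  by (auto intro: generate.incl generate.one)

lemma diff_graph_edge_sym: "diff_graph_edge G x y \<Longrightarrow> diff_graph_edge G y x"
  unfolding diff_graph_edge_def int_power_graph_edge_def power_graph_edge_def by blast

lemma (in group) diff_graph_edgeI:
  assumes "x \<in> carrier G" "y \<in> carrier G"
    and "z \<in> generate G {x}" "z \<in> generate G {y}" "z \<noteq> \<one>"
    and "x [^] (m::nat) = \<one>" "y [^] m \<noteq> \<one>" "y [^] (n::nat) = \<one>" "x [^] n \<noteq> \<one>"
  shows "diff_graph_edge G x y"
  using assms pow_eq_one_if_in_generate unfolding diff_graph_edge_iff by blast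

lemma clique_number_five_cycle_le_2:
  assumes "\<And>x y. E x y \<Longrightarrow> E y x"
    and "\<not> E v0 v2" "\<not> E v0 v3" "\<not> E v1 v3" "\<not> E v1 v4" "\<not> E v2 v4"
  shows "clique_number {v0, v1, v2, v3, v4} E \<le> 2"
proof -
  have small_cliques: "card K \<le> 2" if "K \<subseteq> {v0, v1, v2, v3, v4}" "is_clique K E" for K
  proof (rule ccontr)
    assume "\<not> card K \<le> 2"
    then obtain T where "T \<subseteq> K" "card T = 3"
      using obtain_subset_with_card_n[of 3 K] by auto
    then obtain x y z where "{x, y, z} \<subseteq> K" and distinct: "x \<noteq> y" "y \<noteq> z" "x \<noteq> z"
      unfolding card_3_iff by blast
    then have "x \<in> {v0, v1, v2, v3, v4}" "y \<in> {v0, v1, v2, v3, v4}" "z \<in> {v0, v1, v2, v3, v4}"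
      "E x y" "E y z" "E x z"
      using that unfolding is_clique_def by blast+
    then show False
      using distinct assms by auto
  qed
  show ?thesis
    unfolding clique_number_def
  proof (rule Max.boundedI)
    show "finite {card K | K. K \<subseteq> {v0, v1, v2, v3, v4} \<and> is_clique K E}"
      using small_cliques by (auto intro: finite_subset[of _ "{..2}"])
    show "{card K | K. K \<subseteq> {v0, v1, v2, v3, v4} \<and> is_clique K E} \<noteq> {}"
      unfolding is_clique_def by blast
  qed (use small_cliques in blast)
qed

lemma chromatic_number_five_cycle_ge_3:
  assumes "E v0 v1" "E v1 v2" "E v2 v3" "E v3 v4" "E v4 v0"
    and "v0 \<noteq> v1" "v1 \<noteq> v2" "v2 \<noteq> v3" "v3 \<noteq> v4" "v4 \<noteq> v0"
  shows "3 \<le> chromatic_number {v0, v1, v2, v3, v4} E"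
  unfolding chromatic_number_def
proof (rule LeastI2_ex)
  let ?col = "\<lambda>x. if x = v0 then 0 else if x = v1 then 1 else if x = v2 then 2
    else if x = v3 then 3 else 4::nat"
  have "proper_colouring {v0, v1, v2, v3, v4} E ?col 5"
    unfolding proper_colouring_def by auto
  then show "\<exists>k col. proper_colouring {v0, v1, v2, v3, v4} E col k"
    by blast
next
  fix k
  assume "\<exists>col. proper_colouring {v0, v1, v2, v3, v4} E col k"
  then obtain col where col: "proper_colouring {v0, v1, v2, v3, v4} E col k" ..
  then have "col v0 \<noteq> col v1" "col v1 \<noteq> col v2" "col v2 \<noteq> col v3" "col v3 \<noteq> col v4" "col v4 \<noteq> col v0"
    using assms unfolding proper_colouring_def by blast+
  moreover have "col v0 < k" "col v1 < k" "col v2 < k" "col v3 < k" "col v4 < k"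
    using col unfolding proper_colouring_def by simp_all
  ultimately show "3 \<le> k"
    by linarith
qed

lemma not_perfect_graph_if_induced_five_cycle:
  assumes sym: "\<And>x y. E x y \<Longrightarrow> E y x"
    and edges: "E v0 v1" "E v1 v2" "E v2 v3" "E v3 v4" "E v4 v0"
    and non_edges: "\<not> E v0 v2" "\<not> E v0 v3" "\<not> E v1 v3" "\<not> E v1 v4" "\<not> E v2 v4"
    and "{v0, v1, v2, v3, v4} \<subseteq> V"
  shows "\<not> perfect_graph V E"
proof -
  have "v0 \<noteq> v1" "v1 \<noteq> v2" "v2 \<noteq> v3" "v3 \<noteq> v4" "v4 \<noteq> v0"
    using edges non_edges sym by metis+
  then have "clique_number {v0, v1, v2, v3, v4} E < chromatic_number {v0, v1, v2, v3, v4} E"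
    using clique_number_five_cycle_le_2[of E, OF sym non_edges]
      chromatic_number_five_cycle_ge_3[of E v0 v1 v2 v3 v4, OF edges]
    by linarith
  then show ?thesis
    using \<open>{v0, v1, v2, v3, v4} \<subseteq> V\<close> unfolding perfect_graph_def by fastforce
qed

context group
begin

context
  fixes a b c d
  assumes carrier: "a \<in> carrier G" "b \<in> carrier G" "c \<in> carrier G" "d \<in> carrier G"
    and nontrivial: "a \<noteq> \<one>" "b \<noteq> \<one>" "c \<noteq> \<one>" "d \<noteq> \<one>"
    and coprime: "coprime (ord a) (ord b)" "coprime (ord a) (ord c)" "coprime (ord a) (ord d)"
      "coprime (ord b) (ord c)" "coprime (ord b) (ord d)" "coprime (ord c) (ord d)"
    and commute: "a \<otimes> b = b \<otimes> a" "a \<otimes> c = c \<otimes> a" "a \<otimes> d = d \<otimes> a"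
      "b \<otimes> c = c \<otimes> b" "b \<otimes> d = d \<otimes> b" "c \<otimes> d = d \<otimes> c"
begin

private lemma coprime_ord:
  "coprime (ord a) (ord b)" "coprime (ord a) (ord c)" "coprime (ord a) (ord d)"
  "coprime (ord b) (ord c)" "coprime (ord b) (ord d)" "coprime (ord c) (ord d)"
  "coprime (ord b) (ord a)" "coprime (ord c) (ord a)" "coprime (ord d) (ord a)"
  "coprime (ord c) (ord b)" "coprime (ord d) (ord b)" "coprime (ord d) (ord c)"
  using coprime by (simp_all add: coprime_commute)

private lemma ord_not_dvd:
  "\<not> ord a dvd ord b" "\<not> ord a dvd ord c" "\<not> ord a dvd ord d"
  "\<not> ord b dvd ord a" "\<not> ord b dvd ord c" "\<not> ord b dvd ord d"
  "\<not> ord c dvd ord a" "\<not> ord c dvd ord b" "\<not> ord c dvd ord d"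
  "\<not> ord d dvd ord a" "\<not> ord d dvd ord b" "\<not> ord d dvd ord c"
  using coprime_ord nontrivial carrier ord_eq_1 coprime_common_divisor_nat by (metis dvd_refl)+

private lemma product_pows:
  "(a \<otimes> b) [^] n = a [^] n \<otimes> b [^] n" "(a \<otimes> c) [^] n = a [^] n \<otimes> c [^] n"
  "(c \<otimes> d) [^] n = c [^] n \<otimes> d [^] n" "(a \<otimes> b \<otimes> c) [^] n = a [^] n \<otimes> b [^] n \<otimes> c [^] n"
  "(a \<otimes> c \<otimes> d) [^] n = a [^] n \<otimes> c [^] n \<otimes> d [^] n" for n :: nat
proof -
  have abc: "a \<otimes> b \<otimes> c = c \<otimes> (a \<otimes> b)" and acd: "a \<otimes> c \<otimes> d = d \<otimes> (a \<otimes> c)"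
    using carrier commute by (metis m_assoc)+
  show "(a \<otimes> b) [^] n = a [^] n \<otimes> b [^] n" "(a \<otimes> c) [^] n = a [^] n \<otimes> c [^] n"
    "(c \<otimes> d) [^] n = c [^] n \<otimes> d [^] n" "(a \<otimes> b \<otimes> c) [^] n = a [^] n \<otimes> b [^] n \<otimes> c [^] n"
    "(a \<otimes> c \<otimes> d) [^] n = a [^] n \<otimes> c [^] n \<otimes> d [^] n"
    using carrier
    by (simp_all add: pow_mult_distrib[OF commute(1)] pow_mult_distrib[OF commute(2)]
        pow_mult_distrib[OF commute(6)] pow_mult_distrib[OF abc] pow_mult_distrib[OF acd])
qed

private lemmas pow_simps = carrier product_pows pow_eq_id pow_eq_id[THEN iffD2] coprime_ord ord_not_dvd
  coprime_dvd_mult_left_iff coprime_dvd_mult_right_iff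

private lemma generators_in_products:
  "a \<in> generate G {a \<otimes> b}" "a \<in> generate G {a \<otimes> c}"
  "a \<in> generate G {a \<otimes> b \<otimes> c}" "a \<in> generate G {a \<otimes> c \<otimes> d}"
  "c \<in> generate G {a \<otimes> c}" "c \<in> generate G {c \<otimes> d}" "c \<in> generate G {a \<otimes> b \<otimes> c}"
  by (rule in_generate_if_pow_eq[where n = "ord a" and m = "ord b"]
      in_generate_if_pow_eq[where n = "ord a" and m = "ord c"]
      in_generate_if_pow_eq[where n = "ord a" and m = "ord b * ord c"]
      in_generate_if_pow_eq[where n = "ord a" and m = "ord c * ord d"]
      in_generate_if_pow_eq[where n = "ord c" and m = "ord a"]
      in_generate_if_pow_eq[where n = "ord c" and m = "ord d"]
      in_generate_if_pow_eq[where n = "ord c" and m = "ord a * ord b"];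
    simp add: pow_simps)+

private lemma five_cycle_edges:
  "diff_graph_edge G (a \<otimes> b) (a \<otimes> c)" "diff_graph_edge G (a \<otimes> c) (c \<otimes> d)"
  "diff_graph_edge G (c \<otimes> d) (a \<otimes> b \<otimes> c)" "diff_graph_edge G (a \<otimes> b \<otimes> c) (a \<otimes> c \<otimes> d)"
  "diff_graph_edge G (a \<otimes> c \<otimes> d) (a \<otimes> b)"
  by (rule diff_graph_edgeI[where z = a and m = "ord a * ord b" and n = "ord a * ord c"]
      diff_graph_edgeI[where z = c and m = "ord a * ord c" and n = "ord c * ord d"]
      diff_graph_edgeI[where z = c and m = "ord b * ord c * ord d" and n = "ord a * ord b * ord c"]
      diff_graph_edgeI[where z = a and m = "ord a * ord b * ord c" and n = "ord a * ord c * ord d"]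
      diff_graph_edgeI[where z = a and m = "ord a * ord c * ord d" and n = "ord a * ord b * ord c"];
    simp add: pow_simps generators_in_products nontrivial)+

private lemma five_cycle_non_edges:
  "\<not> diff_graph_edge G (a \<otimes> b) (c \<otimes> d)" "\<not> diff_graph_edge G (a \<otimes> b) (a \<otimes> b \<otimes> c)"
  "\<not> diff_graph_edge G (a \<otimes> c) (a \<otimes> b \<otimes> c)" "\<not> diff_graph_edge G (a \<otimes> c) (a \<otimes> c \<otimes> d)"
  "\<not> diff_graph_edge G (c \<otimes> d) (a \<otimes> c \<otimes> d)"
proof -
  have "generate G {a \<otimes> b} \<inter> generate G {c \<otimes> d} = {\<one>}"
    by (rule generate_inter_eq_one_if_coprime_pows[where m = "ord a * ord b" and n = "ord c * ord d"])
      (simp_all add: pow_simps)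
  moreover have "a \<otimes> b \<in> generate G {a \<otimes> b \<otimes> c}" "a \<otimes> c \<in> generate G {a \<otimes> b \<otimes> c}"
    "a \<otimes> c \<in> generate G {a \<otimes> c \<otimes> d}" "c \<otimes> d \<in> generate G {a \<otimes> c \<otimes> d}"
    by (rule in_generate_if_pow_eq[where n = "ord a * ord b" and m = "ord c"]
        in_generate_if_pow_eq[where n = "ord a * ord c" and m = "ord b"]
        in_generate_if_pow_eq[where n = "ord a * ord c" and m = "ord d"]
        in_generate_if_pow_eq[where n = "ord c * ord d" and m = "ord a"];
      simp add: pow_simps)+
  ultimately show "\<not> diff_graph_edge G (a \<otimes> b) (c \<otimes> d)" "\<not> diff_graph_edge G (a \<otimes> b) (a \<otimes> b \<otimes> c)"
    "\<not> diff_graph_edge G (a \<otimes> c) (a \<otimes> b \<otimes> c)" "\<not> diff_graph_edge G (a \<otimes> c) (a \<otimes> c \<otimes> d)"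
    "\<not> diff_graph_edge G (c \<otimes> d) (a \<otimes> c \<otimes> d)"
    unfolding diff_graph_edge_iff by blast+
qed

lemma diff_graph_not_perfect_if_commuting_coprime:
  "\<not> perfect_graph (diff_graph_vertices G) (diff_graph_edge G)"
proof (rule not_perfect_graph_if_induced_five_cycle[OF _ five_cycle_edges five_cycle_non_edges])
  show "{a \<otimes> b, a \<otimes> c, c \<otimes> d, a \<otimes> b \<otimes> c, a \<otimes> c \<otimes> d} \<subseteq> diff_graph_vertices G"
    using five_cycle_edges unfolding diff_graph_vertices_def diff_graph_edge_iff by blast
qed (rule diff_graph_edge_sym)

end

end

lemma obtain_four_distinct_elements:
  assumes "4 \<le> card A"
  obtains a b c d where "{a, b, c, d} \<subseteq> A" "distinct [a, b, c, d]"
  using assms by (auto simp: card_le_Suc_iff numeral_eq_Suc)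

lemma (in group) nilpotent_diff_graph_not_perfect_if_coprime:
  assumes "nilpotent_group G"
    and carrier: "a \<in> carrier G" "b \<in> carrier G" "c \<in> carrier G" "d \<in> carrier G"
    and nontrivial: "a \<noteq> \<one>" "b \<noteq> \<one>" "c \<noteq> \<one>" "d \<noteq> \<one>"
    and coprime: "coprime (ord a) (ord b)" "coprime (ord a) (ord c)" "coprime (ord a) (ord d)"
      "coprime (ord b) (ord c)" "coprime (ord b) (ord d)" "coprime (ord c) (ord d)"
  shows "\<not> perfect_graph (diff_graph_vertices G) (diff_graph_edge G)"
  using nilpotent_group_coprime_commute[OF assms(1)] carrier coprime
  by (intro diff_graph_not_perfect_if_commuting_coprime[OF carrier nontrivial coprime]) blast+

theorem proposition7p2:
  fixes G :: "('a, 'b) monoid_scheme"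
  assumes "group G"
    and "finite (carrier G)"
    and "nilpotent_group G"
    and "card {p::nat. Factorial_Ring.prime p \<and> p dvd order G} \<ge> 4"
  shows "\<not> perfect_graph (diff_graph_vertices G) (diff_graph_edge G)"
proof -
  interpret group G by fact
  obtain p q r s :: nat
    where primes: "{p, q, r, s} \<subseteq> {p. Factorial_Ring.prime p \<and> p dvd order G}"
      and "distinct [p, q, r, s]"
    using obtain_four_distinct_elements[OF assms(4)] .
  have "\<exists>a \<in> carrier G. ord a = p" if "Factorial_Ring.prime p" "p dvd order G" for p
    using exists_ord_eq_prime[OF assms(2) that] by blast
  then obtain elt where elt: "elt p \<in> carrier G" "ord (elt p) = p"
    if "Factorial_Ring.prime p" "p dvd order G" for p
    by metis
  have prime_elts: "Factorial_Ring.prime x" "elt x \<in> carrier G" "ord (elt x) = x" if "x \<in> {p, q, r, s}" for x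
    using elt primes that by auto
  then have nontrivial: "elt x \<noteq> \<one>\<^bsub>G\<^esub>" if "x \<in> {p, q, r, s}" for x
    using that by (metis ord_id not_prime_1)
  moreover have "coprime x y" if "x \<in> {p, q, r, s}" "y \<in> {p, q, r, s}" "x \<noteq> y" for x y
    using primes that by (auto intro: primes_coprime)
  ultimately show ?thesis
    using prime_elts \<open>distinct [p, q, r, s]\<close>
    by (intro nilpotent_diff_graph_not_perfect_if_coprime[OF assms(3),
          where a = "elt p" and b = "elt q" and c = "elt r" and d = "elt s"]) simp_all
qed

end
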